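(* Let $G$ be a graph and let $S$ be the set of simplicial vertices of $G$. Then $S$ is a general position set of $G$.
   Context: All graphs are finite, simple and connected. A vertex is simplicial if its neighbors induce a complete subgraph. A set $S$ of vertices is a general position set of $G$ if no three vertices of $S$ lie on a common geodesic (shortest path) of $G$. *)

theory Defs
  imports Main
begin

definition simple_graph :: "'a set \<Rightarrow> ('a \<Rightarrow> 'a \<Rightarrow> bool) \<Rightarrow> bool" where
  "simple_graph V E \<longleftrightarrow> finite V \<and> V \<noteq> {} \<and>
     (\<forall>u v. E u v \<longrightarrow> u \<in> V \<and> v \<in> V) \<and>
     (\<forall>u v. E u v \<longrightarrow> E v u) \<and> (\<forall>u. \<not> E u u)"

definition walk :: "'a set \<Rightarrow> ('a \<Rightarrow> 'a \<Rightarrow> bool) \<Rightarrow> 'a list \<Rightarrow> bool" where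
  "walk V E xs \<longleftrightarrow> xs \<noteq> [] \<and> set xs \<subseteq> V \<and>
     (\<forall>i. Suc i < length xs \<longrightarrow> E (xs ! i) (xs ! Suc i))"

definition walk_betw :: "'a set \<Rightarrow> ('a \<Rightarrow> 'a \<Rightarrow> bool) \<Rightarrow> 'a \<Rightarrow> 'a list \<Rightarrow> 'a \<Rightarrow> bool" where
  "walk_betw V E u xs v \<longleftrightarrow> walk V E xs \<and> hd xs = u \<and> last xs = v"

definition connected_graph :: "'a set \<Rightarrow> ('a \<Rightarrow> 'a \<Rightarrow> bool) \<Rightarrow> bool" where
  "connected_graph V E \<longleftrightarrow> (\<forall>u\<in>V. \<forall>v\<in>V. \<exists>xs. walk_betw V E u xs v)"

definition dist :: "'a set \<Rightarrow> ('a \<Rightarrow> 'a \<Rightarrow> bool) \<Rightarrow> 'a \<Rightarrow> 'a \<Rightarrow> nat" where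
  "dist V E u v = (LEAST n. \<exists>xs. walk_betw V E u xs v \<and> length xs = Suc n)"

text \<open>A geodesic: a walk between u and v whose number of edges equals d(u,v)
  (such a walk is automatically a path).\<close>
definition geodesic :: "'a set \<Rightarrow> ('a \<Rightarrow> 'a \<Rightarrow> bool) \<Rightarrow> 'a list \<Rightarrow> bool" where
  "geodesic V E xs \<longleftrightarrow> walk V E xs \<and> length xs = Suc (dist V E (hd xs) (last xs))"

definition general_position_set :: "'a set \<Rightarrow> ('a \<Rightarrow> 'a \<Rightarrow> bool) \<Rightarrow> 'a set \<Rightarrow> bool" where
  "general_position_set V E S \<longleftrightarrow> S \<subseteq> V \<and>
     (\<forall>x\<in>S. \<forall>y\<in>S. \<forall>z\<in>S. x \<noteq> y \<and> y \<noteq> z \<and> x \<noteq> z \<longrightarrow>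
        \<not> (\<exists>P. geodesic V E P \<and> {x, y, z} \<subseteq> set P))"

definition neighbors :: "'a set \<Rightarrow> ('a \<Rightarrow> 'a \<Rightarrow> bool) \<Rightarrow> 'a \<Rightarrow> 'a set" where
  "neighbors V E v = {u \<in> V. E v u}"

definition simplicial :: "'a set \<Rightarrow> ('a \<Rightarrow> 'a \<Rightarrow> bool) \<Rightarrow> 'a \<Rightarrow> bool" where
  "simplicial V E v \<longleftrightarrow> v \<in> V \<and>
     (\<forall>x\<in>neighbors V E v. \<forall>y\<in>neighbors V E v. x \<noteq> y \<longrightarrow> E x y)"

end

theory Submission
  imports Defs
begin

text \<open>An interior vertex P!i of a geodesic P has two distinct neighbours P!(i-1) and P!(i+1)
  on P (geodesics repeat no vertex); if P!i were simplicial these would be adjacent, and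
  skipping P!i would give a shorter walk between the ends of P. Of three distinct vertices
  on a geodesic one is interior, so they cannot all be simplicial.\<close>

lemma walk_append:
  assumes "walk V E xs" "walk V E ys" "E (last xs) (hd ys)"
  shows "walk V E (xs @ ys)"
  unfolding walk_def
proof (intro conjI allI impI)
  show "xs @ ys \<noteq> []" using assms(1) by (simp add: walk_def)
  show "set (xs @ ys) \<subseteq> V" using assms(1,2) by (simp add: walk_def)
  have ne: "xs \<noteq> []" "ys \<noteq> []" using assms(1,2) by (auto simp: walk_def)
  fix i assume i: "Suc i < length (xs @ ys)"
  consider "Suc i < length xs" | "Suc i = length xs" | "length xs \<le> i" by linarith
  then show "E ((xs @ ys) ! i) ((xs @ ys) ! Suc i)"
  proof cases
    case 1
    then show ?thesis using assms(1) by (simp add: walk_def nth_append)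
  next
    case 2
    then have "i = length xs - 1" by simp
    with 2 show ?thesis using assms(3) ne by (simp add: nth_append last_conv_nth hd_conv_nth)
  next
    case 3
    then have "Suc (i - length xs) < length ys" using i by simp
    then have "E (ys ! (i - length xs)) (ys ! Suc (i - length xs))"
      using assms(2) by (simp add: walk_def)
    then show ?thesis using 3 by (simp add: nth_append Suc_diff_le)
  qed
qed

lemma walk_betw_append:
  assumes "walk_betw V E u xs a" "E a b" "walk_betw V E b ys v"
  shows "walk_betw V E u (xs @ ys) v"
  using assms walk_append[of V E xs ys]
  by (auto simp: walk_betw_def walk_def)

lemma walk_betw_take:
  assumes "walk V E P" "k < length P"
  shows "walk_betw V E (hd P) (take (Suc k) P) (P ! k)"
proof -
  have "last (take (Suc k) P) = P ! k" using assms(2) by (simp add: take_Suc_conv_app_nth)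
  with assms show ?thesis unfolding walk_betw_def walk_def by (auto dest: in_set_takeD)
qed

lemma walk_betw_drop:
  assumes "walk V E P" "k < length P"
  shows "walk_betw V E (P ! k) (drop k P) (last P)"
  using assms unfolding walk_betw_def walk_def
  by (auto simp: hd_drop_conv_nth dest: in_set_dropD)

lemma walk_betw_join:
  assumes xs: "walk_betw V E u xs w" and ys: "walk_betw V E w ys v"
  shows "walk_betw V E u (xs @ tl ys) v"
proof (cases "Suc 0 < length ys")
  case True
  have "walk V E ys" using ys by (simp add: walk_betw_def)
  then have "E w (ys ! Suc 0)" "walk_betw V E (ys ! Suc 0) (drop (Suc 0) ys) v"
    using ys True walk_betw_drop[of V E ys "Suc 0"]
    by (auto simp: walk_betw_def walk_def hd_conv_nth)
  with xs show ?thesis by (simp add: walk_betw_append drop_Suc)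
next
  case False
  then have "tl ys = []" by (cases ys) auto
  moreover have "w = v"
    using ys False by (auto simp: walk_betw_def walk_def last_conv_nth hd_conv_nth)
  ultimately show ?thesis using xs by simp
qed

lemma dist_le_length:
  assumes "walk_betw V E u xs v"
  shows "Suc (dist V E u v) \<le> length xs"
proof -
  have "xs \<noteq> []" using assms by (simp add: walk_betw_def walk_def)
  then have "length xs = Suc (length xs - 1)" by simp
  moreover have "dist V E u v \<le> length xs - 1"
    unfolding dist_def using assms calculation by (intro Least_le) blast
  ultimately show ?thesis by linarith
qed

lemma geodesic_shortest:
  assumes "geodesic V E P" "walk_betw V E (hd P) Q (last P)"
  shows "length P \<le> length Q"
  using assms dist_le_length by (fastforce simp: geodesic_def)

lemma geodesic_distinct:
  assumes P: "geodesic V E P"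
  shows "distinct P"
proof (rule ccontr)
  have w: "walk V E P" using P by (simp add: geodesic_def)
  assume "\<not> distinct P"
  then obtain i j where ij: "i < j" "j < length P" "P ! i = P ! j"
    by (metis distinct_conv_nth linorder_neqE_nat)
  have "walk_betw V E (hd P) (take (Suc i) P) (P ! i)"
    using walk_betw_take[OF w, of i] ij by simp
  moreover have "walk_betw V E (P ! i) (drop j P) (last P)"
    using walk_betw_drop[OF w ij(2)] ij(3) by simp
  ultimately have "walk_betw V E (hd P) (take (Suc i) P @ tl (drop j P)) (last P)"
    by (rule walk_betw_join)
  from geodesic_shortest[OF P this] ij show False by simp
qed

lemma geodesic_no_chord:
  assumes P: "geodesic V E P" and i: "0 < i" "Suc i < length P"
  shows "\<not> E (P ! (i - 1)) (P ! Suc i)"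
proof
  have w: "walk V E P" using P by (simp add: geodesic_def)
  assume chord: "E (P ! (i - 1)) (P ! Suc i)"
  have "walk_betw V E (hd P) (take i P) (P ! (i - 1))"
    using walk_betw_take[OF w, of "i - 1"] i by simp
  from walk_betw_append[OF this chord walk_betw_drop[OF w i(2)]]
  have "walk_betw V E (hd P) (take i P @ drop (Suc i) P) (last P)" .
  from geodesic_shortest[OF P this] i show False by simp
qed

lemma geodesic_interior_not_simplicial:
  assumes g: "simple_graph V E" and P: "geodesic V E P"
    and i: "0 < i" "Suc i < length P"
  shows "\<not> simplicial V E (P ! i)"
proof
  assume s: "simplicial V E (P ! i)"
  have w: "walk V E P" using P by (simp add: geodesic_def)
  have step: "\<And>k. Suc k < length P \<Longrightarrow> E (P ! k) (P ! Suc k)"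
    using w by (simp add: walk_def)
  have "E (P ! (i - 1)) (P ! i)" "E (P ! i) (P ! Suc i)"
    using step[of "i - 1"] step[of i] i by simp_all
  with g have "P ! (i - 1) \<in> neighbors V E (P ! i)" "P ! Suc i \<in> neighbors V E (P ! i)"
    by (auto simp: neighbors_def simple_graph_def)
  moreover have "P ! (i - 1) \<noteq> P ! Suc i"
    using geodesic_distinct[OF P] i by (simp add: nth_eq_iff_index_eq)
  ultimately have "E (P ! (i - 1)) (P ! Suc i)"
    using s by (simp add: simplicial_def)
  with geodesic_no_chord[OF P i] show False ..
qed

lemma three_in_list_interior:
  assumes "{x, y, z} \<subseteq> set P" "x \<noteq> y" "y \<noteq> z" "x \<noteq> z"
  obtains m where "0 < m" "Suc m < length P" "P ! m \<in> {x, y, z}"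
proof -
  obtain i j k where "i < length P" "j < length P" "k < length P"
    "P ! i = x" "P ! j = y" "P ! k = z"
    using assms(1) by (auto simp: in_set_conv_nth)
  moreover from calculation assms(2-4) have "i \<noteq> j" "j \<noteq> k" "i \<noteq> k" by auto
  ultimately have "\<exists>m. (m = i \<or> m = j \<or> m = k) \<and> 0 < m \<and> Suc m < length P"
    by arith
  with \<open>P ! i = x\<close> \<open>P ! j = y\<close> \<open>P ! k = z\<close> that show ?thesis by blast
qed

theorem lemma3p5:
  fixes V :: "'a set" and E :: "'a \<Rightarrow> 'a \<Rightarrow> bool"
  assumes "simple_graph V E" and "connected_graph V E"
  shows "general_position_set V E {v \<in> V. simplicial V E v}"
  unfolding general_position_set_def
proof (intro conjI ballI impI notI)
  show "{v \<in> V. simplicial V E v} \<subseteq> V" by blast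
  fix x y z
  assume S: "x \<in> {v \<in> V. simplicial V E v}" "y \<in> {v \<in> V. simplicial V E v}"
    "z \<in> {v \<in> V. simplicial V E v}"
    and xyz: "x \<noteq> y \<and> y \<noteq> z \<and> x \<noteq> z"
    and "\<exists>P. geodesic V E P \<and> {x, y, z} \<subseteq> set P"
  then obtain P where P: "geodesic V E P" and sub: "{x, y, z} \<subseteq> set P" by blast
  obtain m where m: "0 < m" "Suc m < length P" and "P ! m \<in> {x, y, z}"
    using three_in_list_interior[OF sub] xyz by blast
  with S have "simplicial V E (P ! m)" by blast
  with geodesic_interior_not_simplicial[OF assms(1) P m] show False ..
qed

end
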